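(* Let $\mathcal{S}$ be a temporal feedback graph on $T$ rounds such that every neighborhood $S_t$ is contained in the union of at most $R$ orders of $\mathcal{S}$. Then $\mathsf{UB}(\mathcal{S})\le\sqrt{R}\,\mathsf{LB}(\mathcal{S})$, i.e. $\mathsf{UB}(\mathcal{S})/\mathsf{LB}(\mathcal{S})\le\sqrt{R}$.
   Context: A temporal feedback graph $\mathcal{S}$ is a collection of subsets $S_t\subseteq[T]\setminus\{t\}$, $t\in[T]$. An order is a sequence of rounds $t_1,\dots,t_w$ with $t_u\in S_{t_v}$ for all $u<v$; maximal if no super-sequence is an order; $C_1,\dots,C_N$ are the maximal orders. $\mathsf{UB}(\mathcal{S})$ is the optimal value of: minimize $\sum_{c=1}^N\sqrt{\sum_{t\in C_c}\lambda_{c,t}^2}$ subject to $\sum_c\lambda_{c,t}=1$ for all $t$, $\lambda_{c,t}=0$ if $t\notin C_c$, $\lambda_{c,t}\ge0$ (equivalently, the optimal value of: maximize $\sum_t\mu_t$ s.t. $\sum_{t\in C_c}\mu_t^2\le1$ for all $c$, $\mu\ge0$). $\mathsf{LB}(\mathcal{S})$ is the optimal value (supremum) of the lower bound program: maximize $\sum_{t=1}^T\varepsilon_t$ subject to $\sum_{t\in S_{t'}}\varepsilon_t^2\le1$ for all $t'\in[T]$ and $\varepsilon_t\ge0$. *)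

theory Defs
  imports "HOL-Analysis.Analysis" "HOL-Library.Sublist"
begin

definition tfg :: "nat \<Rightarrow> (nat \<Rightarrow> nat set) \<Rightarrow> bool" where
  "tfg T S \<longleftrightarrow> (\<forall>t\<in>{1..T}. S t \<subseteq> {1..T} - {t})"

definition is_order :: "nat \<Rightarrow> (nat \<Rightarrow> nat set) \<Rightarrow> nat list \<Rightarrow> bool" where
  "is_order T S ts \<longleftrightarrow> set ts \<subseteq> {1..T} \<and>
     (\<forall>u v. u < v \<and> v < length ts \<longrightarrow> ts ! u \<in> S (ts ! v))"

definition is_max_order :: "nat \<Rightarrow> (nat \<Rightarrow> nat set) \<Rightarrow> nat list \<Rightarrow> bool" where
  "is_max_order T S ts \<longleftrightarrow> is_order T S ts \<and>
     (\<forall>ys. is_order T S ys \<and> subseq ts ys \<longrightarrow> ys = ts)"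

definition max_orders :: "nat \<Rightarrow> (nat \<Rightarrow> nat set) \<Rightarrow> nat list set" where
  "max_orders T S = {ts. is_max_order T S ts}"

definition UB :: "nat \<Rightarrow> (nat \<Rightarrow> nat set) \<Rightarrow> real" where
  "UB T S = Inf {(\<Sum>c\<in>max_orders T S. sqrt (\<Sum>t\<in>set c. (lam c t)\<^sup>2)) | lam.
       (\<forall>t\<in>{1..T}. (\<Sum>c\<in>max_orders T S. lam c t) = 1) \<and>
       (\<forall>c\<in>max_orders T S. \<forall>t. t \<notin> set c \<longrightarrow> lam c t = 0) \<and>
       (\<forall>c t. lam c t \<ge> 0)}"

text \<open>LB: supremum of the lower bound program (in the extended reals, since it can be unbounded).\<close>
definition LB :: "nat \<Rightarrow> (nat \<Rightarrow> nat set) \<Rightarrow> ereal" where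
  "LB T S = Sup {ereal (\<Sum>t\<in>{1..T}. eps t) | eps.
       (\<forall>t'\<in>{1..T}. (\<Sum>t\<in>S t'. (eps t)\<^sup>2) \<le> 1) \<and> (\<forall>t. eps t \<ge> 0)}"

end

theory Submission
  imports Defs
begin

(* Choose a probability distribution p on the maximal orders that minimises
   Phi(p) = (\<Sum>t. 1 / pi_p(t)), where pi_p(t) is the p-mass of the maximal orders containing t.
   The weights lambda(c,t) = p(c) / pi_p(t) are feasible for UB, and Jensen's inequality bounds
   their value by sqrt Phi(p).  The first-order optimality condition at p says
   (\<Sum>t\<in>c. pi_p(t)^-2) \<le> Phi(p) for every maximal order c, so mu(t) = 1 / (pi_p(t) sqrt Phi(p))
   is feasible for the dual of UB with value sqrt Phi(p) \<ge> UB.  Since every order lies in a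
   maximal one and every S t is covered by at most R orders, mu / sqrt R is feasible for LB. *)

definition prob_weights :: "'c set \<Rightarrow> ('c \<Rightarrow> real) set" where
  "prob_weights M = {p. (\<forall>c. 0 \<le> p c) \<and> (\<forall>c. c \<notin> M \<longrightarrow> p c = 0) \<and> sum p M = 1}"

lemma prob_weights_nonneg: "p \<in> prob_weights M \<Longrightarrow> 0 \<le> p c"
  by (simp add: prob_weights_def)

lemma prob_weights_outside: "p \<in> prob_weights M \<Longrightarrow> c \<notin> M \<Longrightarrow> p c = 0"
  by (simp add: prob_weights_def)

lemma prob_weights_sum: "p \<in> prob_weights M \<Longrightarrow> sum p M = 1"
  by (simp add: prob_weights_def)

lemma prob_weights_le_1:
  assumes "finite M" "p \<in> prob_weights M" shows "p c \<le> 1"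
proof (cases "c \<in> M")
  case True
  then have "p c \<le> sum p M"
    using assms by (intro member_le_sum) (auto intro: prob_weights_nonneg)
  then show ?thesis using prob_weights_sum[OF assms(2)] by simp
qed (simp add: prob_weights_outside[OF assms(2)])

lemma compact_prob_weights:
  assumes "finite M" shows "compact (prob_weights M)"
proof -
  define B where "B c = (if c \<in> M then {0..1} else {0::real})" for c
  have "prob_weights M = Pi UNIV B \<inter> {p. sum p M = 1}"
    using prob_weights_le_1[OF assms]
    by (auto simp: prob_weights_def B_def Pi_def split: if_splits) (metis order.refl)
  moreover have "compact (Pi UNIV B)"
  proof -
    have "compactin (product_topology (\<lambda>_. euclidean) UNIV) (PiE UNIV B)"
      by (simp add: compactin_PiE compactin_euclidean_iff B_def)
    then show ?thesis
      by (simp add: euclidean_product_topology compactin_euclidean_iff PiE_UNIV_domain)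
  qed
  moreover have "closed {p. sum p M = (1::real)}"
    by (intro closed_Collect_eq continuous_on_sum continuous_on_const
        continuous_on_product_coordinates)
  ultimately show ?thesis by (simp add: compact_Int_closed)
qed

lemma mixture_prob_weights:
  assumes "finite M" "p \<in> prob_weights M" "c \<in> M" "0 \<le> d" "d \<le> 1"
  shows "(\<lambda>e. (1 - d) * p e + (if e = c then d else 0)) \<in> prob_weights M"
  using assms prob_weights_nonneg[OF assms(2)] prob_weights_sum[OF assms(2)]
    prob_weights_outside[OF assms(2)]
  by (auto simp: prob_weights_def sum.distrib sum_distrib_left[symmetric])

locale finite_cover =
  fixes M :: "'c set" and C :: "'c \<Rightarrow> 'a set" and U :: "'a set"
  assumes finite_M: "finite M" and M_nonempty: "M \<noteq> {}" and finite_U: "finite U"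
    and C_subset: "c \<in> M \<Longrightarrow> C c \<subseteq> U"
    and covers: "t \<in> U \<Longrightarrow> \<exists>c\<in>M. t \<in> C c"
begin

definition mass :: "('c \<Rightarrow> real) \<Rightarrow> 'a \<Rightarrow> real" where
  "mass p t = sum p {c\<in>M. t \<in> C c}"

definition inverse_mass_sum :: "('c \<Rightarrow> real) \<Rightarrow> real" where
  "inverse_mass_sum p = (\<Sum>t\<in>U. 1 / mass p t)"

definition admissible :: "('c \<Rightarrow> real) set" where
  "admissible = {p \<in> prob_weights M. \<forall>t\<in>U. 0 < mass p t}"

lemma admissibleD:
  assumes "p \<in> admissible"
  shows admissible_prob_weights: "p \<in> prob_weights M"
    and admissible_mass_pos: "t \<in> U \<Longrightarrow> 0 < mass p t"
  using assms by (auto simp: admissible_def)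

lemma mass_nonneg: "p \<in> prob_weights M \<Longrightarrow> 0 \<le> mass p t"
  unfolding mass_def by (intro sum_nonneg) (auto intro: prob_weights_nonneg)

lemma continuous_on_mass: "continuous_on A (\<lambda>p. mass p t)"
  unfolding mass_def
  by (intro continuous_on_sum continuous_on_subset[OF continuous_on_product_coordinates]) auto

lemma inverse_mass_term_le:
  "p \<in> prob_weights M \<Longrightarrow> t \<in> U \<Longrightarrow> 1 / mass p t \<le> inverse_mass_sum p"
  unfolding inverse_mass_sum_def using finite_U mass_nonneg by (intro member_le_sum) auto

lemma uniform_admissible: "(\<lambda>c. if c \<in> M then 1 / real (card M) else 0) \<in> admissible"
  (is "?u \<in> _")
proof -
  have card: "card M > 0" using finite_M M_nonempty by (simp add: card_gt_0_iff)
  then have u: "?u \<in> prob_weights M" by (simp add: prob_weights_def)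
  have "0 < mass ?u t" if t: "t \<in> U" for t
  proof -
    obtain c where c: "c \<in> M" "t \<in> C c" using covers[OF t] by blast
    have "?u c \<le> mass ?u t"
      unfolding mass_def using c finite_M by (intro member_le_sum) auto
    moreover have "0 < ?u c" using c card by simp
    ultimately show ?thesis by linarith
  qed
  then show ?thesis using u by (simp add: admissible_def)
qed

lemma exists_inverse_mass_sum_minimizer:
  "\<exists>p\<in>admissible. \<forall>q\<in>admissible. inverse_mass_sum p \<le> inverse_mass_sum q"
proof -
  obtain u where u: "u \<in> admissible" using uniform_admissible by blast
  define m where "m = 1 / (inverse_mass_sum u + 1)"
  have "0 \<le> inverse_mass_sum u"
    using u mass_nonneg unfolding inverse_mass_sum_def admissible_def by (simp add: sum_nonneg)
  then have m_pos: "0 < m" by (simp add: m_def)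
  \<comment> \<open>outside \<open>K\<close> a single term \<open>1 / mass q t\<close> already exceeds the cost of \<open>u\<close>\<close>
  define K where "K = prob_weights M \<inter> (\<Inter>t\<in>U. {p. m \<le> mass p t})"
  have small_mass: "inverse_mass_sum u < inverse_mass_sum q"
    if "q \<in> prob_weights M" "t \<in> U" "0 < mass q t" "mass q t < m" for q t
  proof -
    have "inverse_mass_sum u < 1 / m" by (simp add: m_def)
    also have "\<dots> < 1 / mass q t" using that by (intro divide_strict_left_mono) auto
    also have "\<dots> \<le> inverse_mass_sum q" using that by (intro inverse_mass_term_le)
    finally show ?thesis .
  qed
  have "u \<in> K"
    using u small_mass[of u] unfolding K_def admissible_def by (auto intro: leI)
  moreover have "compact K"
    unfolding K_def using compact_prob_weights[OF finite_M]
    by (intro compact_Int_closed closed_INT ballI closed_Collect_le continuous_on_const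
        continuous_on_mass)
  moreover have "continuous_on K inverse_mass_sum"
    unfolding inverse_mass_sum_def[abs_def] using m_pos
    by (intro continuous_on_sum continuous_on_divide continuous_on_const continuous_on_mass)
      (force simp: K_def)
  ultimately obtain p where p: "p \<in> K" "\<forall>q\<in>K. inverse_mass_sum p \<le> inverse_mass_sum q"
    using continuous_attains_inf by blast
  have "p \<in> admissible" using p(1) m_pos unfolding K_def admissible_def by fastforce
  moreover have "inverse_mass_sum p \<le> inverse_mass_sum q" if q: "q \<in> admissible" for q
  proof (cases "q \<in> K")
    case False
    then obtain t where "t \<in> U" "mass q t < m" using q unfolding K_def admissible_def by auto
    then have "inverse_mass_sum u < inverse_mass_sum q"
      using q small_mass unfolding admissible_def by blast
    then show ?thesis using p \<open>u \<in> K\<close> by fastforce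
  qed (use p in blast)
  ultimately show ?thesis by blast
qed

lemma mass_mixture:
  assumes "p \<in> prob_weights M" "c \<in> M"
  shows "mass (\<lambda>e. (1 - d) * p e + (if e = c then d else 0)) t
    = (1 - d) * mass p t + d * of_bool (t \<in> C c)"
  using assms finite_M prob_weights_outside[OF assms(1)]
  by (simp add: mass_def sum.distrib sum_distrib_left[symmetric] sum.delta')

lemma minimizer_difference_quotient_nonneg:
  assumes p: "p \<in> admissible"
    and min: "\<forall>q\<in>admissible. inverse_mass_sum p \<le> inverse_mass_sum q"
    and c: "c \<in> M" and d: "0 < d" "d < 1"
  shows "0 \<le> (\<Sum>t\<in>U. (mass p t - of_bool (t \<in> C c))
                    / (mass p t * ((1 - d) * mass p t + d * of_bool (t \<in> C c))))"
proof -
  define q where "q e = (1 - d) * p e + (if e = c then d else 0)" for e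
  define D where "D t = (1 - d) * mass p t + d * of_bool (t \<in> C c)" for t
  note pos = admissible_mass_pos[OF p] and pw = admissible_prob_weights[OF p]
  have mass_q: "mass q t = D t" for t
    unfolding q_def D_def using pw c by (rule mass_mixture)
  have D_pos: "0 < D t" if "t \<in> U" for t
    using pos[OF that] d by (simp add: D_def add_pos_nonneg)
  have "q \<in> prob_weights M"
    unfolding q_def using d by (intro mixture_prob_weights[OF finite_M pw c]) auto
  then have "q \<in> admissible" using D_pos by (simp add: admissible_def mass_q)
  then have "0 \<le> inverse_mass_sum q - inverse_mass_sum p" using min by simp
  also have "\<dots> = (\<Sum>t\<in>U. 1 / D t - 1 / mass p t)"
    by (simp add: inverse_mass_sum_def mass_q sum_subtractf)
  also have "\<dots> = d * (\<Sum>t\<in>U. (mass p t - of_bool (t \<in> C c)) / (mass p t * D t))"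
    unfolding sum_distrib_left
  proof (intro sum.cong refl)
    fix t assume t: "t \<in> U"
    have "1 / D t - 1 / mass p t = (mass p t - D t) / (mass p t * D t)"
      using pos[OF t] D_pos[OF t] by (simp add: field_simps)
    also have "mass p t - D t = d * (mass p t - of_bool (t \<in> C c))"
      by (simp add: D_def algebra_simps)
    finally show "1 / D t - 1 / mass p t
        = d * ((mass p t - of_bool (t \<in> C c)) / (mass p t * D t))"
      by simp
  qed
  finally show ?thesis using d by (simp add: zero_le_mult_iff D_def)
qed

lemma minimizer_first_order_condition:
  assumes p: "p \<in> admissible"
    and min: "\<forall>q\<in>admissible. inverse_mass_sum p \<le> inverse_mass_sum q"
    and c: "c \<in> M"
  shows "(\<Sum>t\<in>C c. 1 / (mass p t)\<^sup>2) \<le> inverse_mass_sum p"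
proof -
  let ?a = "\<lambda>t. of_bool (t \<in> C c) :: real"
  note pos = admissible_mass_pos[OF p]
  have "((\<lambda>d. \<Sum>t\<in>U. (mass p t - ?a t) / (mass p t * ((1 - d) * mass p t + d * ?a t)))
          \<longlongrightarrow> (\<Sum>t\<in>U. (mass p t - ?a t) / (mass p t * ((1 - 0) * mass p t + 0 * ?a t))))
        (at_right 0)"
    by (intro tendsto_intros) (auto dest!: pos)
  then have "0 \<le> (\<Sum>t\<in>U. (mass p t - ?a t) / (mass p t * ((1 - 0) * mass p t + 0 * ?a t)))"
    by (rule tendsto_lowerbound)
      (auto simp: eventually_at_right_field
        intro!: exI[of _ 1] minimizer_difference_quotient_nonneg[OF p min c])
  also have "\<dots> = (\<Sum>t\<in>U. 1 / mass p t - (if t \<in> C c then 1 / (mass p t)\<^sup>2 else 0))"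
    by (intro sum.cong refl)
      (simp add: field_simps power2_eq_square pos[THEN less_imp_neq, symmetric])
  also have "\<dots> = inverse_mass_sum p - (\<Sum>t\<in>C c. 1 / (mass p t)\<^sup>2)"
    using finite_U C_subset[OF c]
    by (simp add: inverse_mass_sum_def sum_subtractf sum.inter_restrict[symmetric] Int_absorb1)
  finally show ?thesis by simp
qed

definition primal_weights :: "('c \<Rightarrow> real) \<Rightarrow> 'c \<Rightarrow> 'a \<Rightarrow> real" where
  "primal_weights p c t = (if t \<in> C c then p c / mass p t else 0)"

definition dual_weights :: "('c \<Rightarrow> real) \<Rightarrow> 'a \<Rightarrow> real" where
  "dual_weights p t = 1 / (mass p t * sqrt (inverse_mass_sum p))"

lemma inverse_mass_sum_nonneg: "p \<in> prob_weights M \<Longrightarrow> 0 \<le> inverse_mass_sum p"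
  unfolding inverse_mass_sum_def using mass_nonneg by (simp add: sum_nonneg)

lemma primal_weights_feasible:
  assumes p: "p \<in> admissible"
  shows "\<forall>t\<in>U. (\<Sum>c\<in>M. primal_weights p c t) = 1"
    and "\<forall>c\<in>M. \<forall>t. t \<notin> C c \<longrightarrow> primal_weights p c t = 0"
    and "\<forall>c t. 0 \<le> primal_weights p c t"
proof -
  show "\<forall>t\<in>U. (\<Sum>c\<in>M. primal_weights p c t) = 1"
  proof
    fix t assume t: "t \<in> U"
    have "(\<Sum>c\<in>M. primal_weights p c t) = (\<Sum>c\<in>{c\<in>M. t \<in> C c}. p c / mass p t)"
      using finite_M by (simp add: primal_weights_def sum.inter_filter)
    also have "\<dots> = mass p t / mass p t"
      unfolding mass_def by (rule sum_divide_distrib[symmetric])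
    finally show "(\<Sum>c\<in>M. primal_weights p c t) = 1" using admissible_mass_pos[OF p t] by simp
  qed
  show "\<forall>c\<in>M. \<forall>t. t \<notin> C c \<longrightarrow> primal_weights p c t = 0"
    by (simp add: primal_weights_def)
  show "\<forall>c t. 0 \<le> primal_weights p c t"
    using prob_weights_nonneg[OF admissible_prob_weights[OF p]]
      mass_nonneg[OF admissible_prob_weights[OF p]]
    by (simp add: primal_weights_def)
qed

lemma sum_weighted_inverse_mass_squares:
  assumes p: "p \<in> admissible"
  shows "(\<Sum>c\<in>M. p c * (\<Sum>t\<in>C c. 1 / (mass p t)\<^sup>2)) = inverse_mass_sum p"
proof -
  have "(\<Sum>c\<in>M. p c * (\<Sum>t\<in>C c. 1 / (mass p t)\<^sup>2))
      = (\<Sum>c\<in>M. \<Sum>t\<in>U. if t \<in> C c then p c / (mass p t)\<^sup>2 else 0)"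
    using C_subset finite_U
    by (intro sum.cong refl) (simp add: sum_distrib_left sum.inter_restrict[symmetric] Int_absorb1)
  also have "\<dots> = (\<Sum>t\<in>U. \<Sum>c\<in>M. if t \<in> C c then p c / (mass p t)\<^sup>2 else 0)"
    by (rule sum.swap)
  also have "\<dots> = (\<Sum>t\<in>U. mass p t / (mass p t)\<^sup>2)"
    using finite_M by (simp add: mass_def sum_divide_distrib sum.inter_filter[symmetric])
  also have "\<dots> = inverse_mass_sum p"
    unfolding inverse_mass_sum_def using admissible_mass_pos[OF p]
    by (intro sum.cong refl) (simp add: power2_eq_square)
  finally show ?thesis .
qed

lemma primal_weights_value_le:
  assumes p: "p \<in> admissible"
  shows "(\<Sum>c\<in>M. sqrt (\<Sum>t\<in>C c. (primal_weights p c t)\<^sup>2)) \<le> sqrt (inverse_mass_sum p)"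
proof -
  let ?g = "\<lambda>c. \<Sum>t\<in>C c. 1 / (mass p t)\<^sup>2"
  note pw = admissible_prob_weights[OF p]
  have "sqrt (\<Sum>t\<in>C c. (primal_weights p c t)\<^sup>2) = p c * sqrt (?g c)" for c
  proof -
    have "(\<Sum>t\<in>C c. (primal_weights p c t)\<^sup>2) = (p c)\<^sup>2 * ?g c"
      by (simp add: primal_weights_def power_divide sum_distrib_left)
    then show ?thesis using prob_weights_nonneg[OF pw, of c] by (simp add: real_sqrt_mult)
  qed
  moreover have "(\<Sum>c\<in>M. p c * sqrt (?g c))\<^sup>2 \<le> (\<Sum>c\<in>M. p c * (sqrt (?g c))\<^sup>2)"
    using convex_on_sum[OF finite_M M_nonempty convex_power2, of p "\<lambda>c. sqrt (?g c)"] pw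
    by (simp add: prob_weights_sum prob_weights_nonneg)
  moreover have "(\<Sum>c\<in>M. p c * (sqrt (?g c))\<^sup>2) = inverse_mass_sum p"
    using sum_weighted_inverse_mass_squares[OF p] by (simp add: sum_nonneg)
  ultimately show ?thesis by (simp add: real_le_rsqrt)
qed

lemma dual_weights_nonneg: "p \<in> prob_weights M \<Longrightarrow> 0 \<le> dual_weights p t"
  using mass_nonneg inverse_mass_sum_nonneg by (simp add: dual_weights_def)

lemma sum_dual_weights:
  assumes "p \<in> prob_weights M"
  shows "(\<Sum>t\<in>U. dual_weights p t) = sqrt (inverse_mass_sum p)"
proof -
  have "(\<Sum>t\<in>U. dual_weights p t) = inverse_mass_sum p / sqrt (inverse_mass_sum p)"
    by (simp add: dual_weights_def inverse_mass_sum_def sum_divide_distrib)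
  then show ?thesis using inverse_mass_sum_nonneg[OF assms] by (simp add: real_div_sqrt)
qed

lemma dual_weights_feasible:
  assumes p: "p \<in> admissible"
    and min: "\<forall>q\<in>admissible. inverse_mass_sum p \<le> inverse_mass_sum q"
    and c: "c \<in> M"
  shows "(\<Sum>t\<in>C c. (dual_weights p t)\<^sup>2) \<le> 1"
proof -
  have F: "0 \<le> inverse_mass_sum p"
    using admissible_prob_weights[OF p] by (rule inverse_mass_sum_nonneg)
  have "(\<Sum>t\<in>C c. (dual_weights p t)\<^sup>2) = (\<Sum>t\<in>C c. 1 / (mass p t)\<^sup>2) / inverse_mass_sum p"
    using F by (simp add: dual_weights_def sum_divide_distrib power_mult_distrib power_divide)
  also have "\<dots> \<le> 1"
    using minimizer_first_order_condition[OF p min c] F by (auto simp: divide_le_eq_1)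
  finally show ?thesis .
qed

lemma primal_dual_pair:
  obtains lam \<mu> where
    "\<forall>t\<in>U. (\<Sum>c\<in>M. lam c t) = 1" "\<forall>c\<in>M. \<forall>t. t \<notin> C c \<longrightarrow> lam c t = 0"
    "\<forall>c t. 0 \<le> lam c t"
    "\<forall>t. 0 \<le> \<mu> t" "\<forall>c\<in>M. (\<Sum>t\<in>C c. (\<mu> t)\<^sup>2) \<le> 1"
    "(\<Sum>c\<in>M. sqrt (\<Sum>t\<in>C c. (lam c t)\<^sup>2)) \<le> (\<Sum>t\<in>U. \<mu> t)"
proof -
  obtain p where p: "p \<in> admissible"
    and min: "\<forall>q\<in>admissible. inverse_mass_sum p \<le> inverse_mass_sum q"
    using exists_inverse_mass_sum_minimizer by blast
  note pw = admissible_prob_weights[OF p]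
  show thesis
  proof (rule that[OF primal_weights_feasible[OF p]])
    show "\<forall>t. 0 \<le> dual_weights p t" using dual_weights_nonneg[OF pw] by blast
    show "\<forall>c\<in>M. (\<Sum>t\<in>C c. (dual_weights p t)\<^sup>2) \<le> 1"
      using dual_weights_feasible[OF p min] by blast
    show "(\<Sum>c\<in>M. sqrt (\<Sum>t\<in>C c. (primal_weights p c t)\<^sup>2)) \<le> (\<Sum>t\<in>U. dual_weights p t)"
      using primal_weights_value_le[OF p] sum_dual_weights[OF pw] by simp
  qed
qed

end

lemma order_distinct:
  assumes "tfg T S" "is_order T S ts" shows "distinct ts"
proof -
  have "ts ! u \<noteq> ts ! v" if "u < v" "v < length ts" for u v
  proof -
    have "ts ! v \<in> {1..T}" "ts ! u \<in> S (ts ! v)"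
      using assms(2) that unfolding is_order_def by (auto dest: nth_mem)
    then show ?thesis using assms(1) unfolding tfg_def by blast
  qed
  then show ?thesis unfolding distinct_conv_nth by (metis linorder_neqE_nat)
qed

lemma length_order_le:
  assumes "tfg T S" "is_order T S ts" shows "length ts \<le> T"
proof -
  have "length ts = card (set ts)" using order_distinct[OF assms] by (simp add: distinct_card)
  also have "\<dots> \<le> card {1..T}" using assms(2) unfolding is_order_def by (intro card_mono) auto
  finally show ?thesis by simp
qed

lemma finite_max_orders:
  assumes "tfg T S" shows "finite (max_orders T S)"
proof (rule finite_subset[OF _ finite_lists_length_le[of "{1..T}" T]])
  show "max_orders T S \<subseteq> {xs. set xs \<subseteq> {1..T} \<and> length xs \<le> T}"
    using length_order_le[OF assms]
    unfolding max_orders_def is_max_order_def is_order_def by auto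
qed simp

lemma max_order_subset: "c \<in> max_orders T S \<Longrightarrow> set c \<subseteq> {1..T}"
  unfolding max_orders_def is_max_order_def is_order_def by auto

lemma order_subseq_max_order:
  assumes "tfg T S" "is_order T S xs"
  obtains ys where "ys \<in> max_orders T S" "subseq xs ys"
proof -
  define P where "P ys \<longleftrightarrow> is_order T S ys \<and> subseq xs ys" for ys
  have "P xs" using assms(2) by (simp add: P_def)
  moreover have "\<forall>ys. P ys \<longrightarrow> length ys < Suc T"
    using length_order_le[OF assms(1)] by (simp add: P_def less_Suc_eq_le)
  ultimately obtain ys where ys: "P ys" and longest: "\<And>zs. P zs \<Longrightarrow> length zs \<le> length ys"
    using ex_has_greatest_nat[of P xs length "Suc T"] by blast
  have "is_max_order T S ys" unfolding is_max_order_def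
  proof (intro conjI allI impI)
    fix zs assume zs: "is_order T S zs \<and> subseq ys zs"
    then have "P zs" using ys subseq_order.trans unfolding P_def by blast
    then have "length zs \<le> length ys" by (rule longest)
    then show "zs = ys"
      using zs list_emb_length[of "(=)" ys zs] subseq_same_length[of ys zs] by simp
  qed (use ys P_def in blast)
  then show thesis using that ys by (simp add: max_orders_def P_def)
qed

lemma order_subset_max_order:
  assumes "tfg T S" "is_order T S xs"
  obtains c where "c \<in> max_orders T S" "set xs \<subseteq> set c"
proof -
  obtain c where c: "c \<in> max_orders T S" "subseq xs c"
    using order_subseq_max_order[OF assms] .
  have "set xs \<subseteq> set c" using list_emb_set[OF c(2)] by blast
  then show thesis using that c(1) by blast
qed

lemma finite_cover_max_orders:
  assumes "tfg T S" shows "finite_cover (max_orders T S) set {1..T}"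
proof
  show "finite (max_orders T S)" using assms by (rule finite_max_orders)
  have "is_order T S []" by (simp add: is_order_def)
  then show "max_orders T S \<noteq> {}" using order_subset_max_order[OF assms] by blast
  show "finite {1..T}" by simp
  show "set c \<subseteq> {1..T}" if "c \<in> max_orders T S" for c using that by (rule max_order_subset)
  show "\<exists>c\<in>max_orders T S. t \<in> set c" if "t \<in> {1..T}" for t
  proof -
    have "is_order T S [t]" using that by (simp add: is_order_def)
    then show ?thesis using order_subset_max_order[OF assms] by force
  qed
qed

lemma UB_le:
  assumes "\<forall>t\<in>{1..T}. (\<Sum>c\<in>max_orders T S. lam c t) = 1"
    and "\<forall>c\<in>max_orders T S. \<forall>t. t \<notin> set c \<longrightarrow> lam c t = 0"
    and "\<forall>c t. 0 \<le> lam c t"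
  shows "UB T S \<le> (\<Sum>c\<in>max_orders T S. sqrt (\<Sum>t\<in>set c. (lam c t)\<^sup>2))"
  unfolding UB_def using assms
  by (intro cInf_lower bdd_belowI[of _ 0]) (auto intro!: sum_nonneg)

lemma LB_ge:
  assumes "\<forall>t'\<in>{1..T}. (\<Sum>t\<in>S t'. (eps t)\<^sup>2) \<le> 1" and "\<forall>t. 0 \<le> eps t"
  shows "ereal (\<Sum>t\<in>{1..T}. eps t) \<le> LB T S"
  unfolding LB_def using assms by (intro Sup_upper) blast

lemma sum_Union_lists_le:
  fixes f :: "'a \<Rightarrow> real"
  assumes "\<forall>x. 0 \<le> f x" and "\<forall>xs\<in>set xss. sum f (set xs) \<le> B"
  shows "sum f (\<Union>xs\<in>set xss. set xs) \<le> real (length xss) * B"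
  using assms(2)
proof (induction xss)
  case (Cons xs xss)
  have "sum f (set xs \<union> (\<Union>ys\<in>set xss. set ys)) \<le> sum f (set xs) + sum f (\<Union>ys\<in>set xss. set ys)"
    using assms(1) by (simp add: sum_Un sum_nonneg)
  also have "\<dots> \<le> B + real (length xss) * B" using Cons by (intro add_mono) auto
  finally show ?case by (simp add: algebra_simps)
qed simp

lemma UB_le_dual_solution:
  assumes "tfg T S"
  obtains \<mu> where "\<forall>t. 0 \<le> \<mu> t"
    and "\<And>xs. is_order T S xs \<Longrightarrow> (\<Sum>t\<in>set xs. (\<mu> t)\<^sup>2) \<le> 1"
    and "UB T S \<le> (\<Sum>t\<in>{1..T}. \<mu> t)"
proof -
  interpret finite_cover "max_orders T S" set "{1..T}"
    using assms by (rule finite_cover_max_orders)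
  obtain lam \<mu> where lam: "\<forall>t\<in>{1..T}. (\<Sum>c\<in>max_orders T S. lam c t) = 1"
      "\<forall>c\<in>max_orders T S. \<forall>t. t \<notin> set c \<longrightarrow> lam c t = 0" "\<forall>c t. 0 \<le> lam c t"
    and \<mu>_nonneg: "\<forall>t. 0 \<le> \<mu> t"
    and \<mu>_max_orders: "\<forall>c\<in>max_orders T S. (\<Sum>t\<in>set c. (\<mu> t)\<^sup>2) \<le> 1"
    and primal_le_dual:
      "(\<Sum>c\<in>max_orders T S. sqrt (\<Sum>t\<in>set c. (lam c t)\<^sup>2)) \<le> (\<Sum>t\<in>{1..T}. \<mu> t)"
    by (rule primal_dual_pair)
  have "(\<Sum>t\<in>set xs. (\<mu> t)\<^sup>2) \<le> 1" if xs: "is_order T S xs" for xs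
  proof -
    obtain c where c: "c \<in> max_orders T S" "set xs \<subseteq> set c"
      using order_subset_max_order[OF assms xs] .
    then have "(\<Sum>t\<in>set xs. (\<mu> t)\<^sup>2) \<le> (\<Sum>t\<in>set c. (\<mu> t)\<^sup>2)" by (intro sum_mono2) auto
    then show ?thesis using \<mu>_max_orders c(1) by fastforce
  qed
  moreover have "UB T S \<le> (\<Sum>t\<in>{1..T}. \<mu> t)" using UB_le[OF lam] primal_le_dual by linarith
  ultimately show thesis using that \<mu>_nonneg by blast
qed

lemma LB_ge_scaled:
  assumes "R \<ge> 1" and \<mu>_nonneg: "\<forall>t. 0 \<le> \<mu> t"
    and \<mu>_orders: "\<And>xs. is_order T S xs \<Longrightarrow> (\<Sum>t\<in>set xs. (\<mu> t)\<^sup>2) \<le> 1"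
    and cover: "\<forall>t\<in>{1..T}. \<exists>Os. length Os \<le> R \<and> (\<forall>ord\<in>set Os. is_order T S ord) \<and>
              S t \<subseteq> (\<Union>ord\<in>set Os. set ord)"
  shows "ereal ((\<Sum>t\<in>{1..T}. \<mu> t) / sqrt R) \<le> LB T S"
proof -
  have "(\<Sum>t\<in>S t'. (\<mu> t / sqrt R)\<^sup>2) \<le> 1" if t': "t' \<in> {1..T}" for t'
  proof -
    obtain Os where Os: "length Os \<le> R" "\<forall>ord\<in>set Os. is_order T S ord"
        "S t' \<subseteq> (\<Union>ord\<in>set Os. set ord)"
      using cover t' by blast
    have "(\<Sum>t\<in>S t'. (\<mu> t)\<^sup>2) \<le> (\<Sum>t\<in>(\<Union>ord\<in>set Os. set ord). (\<mu> t)\<^sup>2)"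
      using Os(3) by (intro sum_mono2) auto
    also have "\<dots> \<le> real (length Os) * 1"
      using Os(2) \<mu>_orders by (intro sum_Union_lists_le) auto
    also have "\<dots> \<le> R" using Os(1) by simp
    finally show ?thesis
      using assms(1) by (simp add: power_divide sum_divide_distrib[symmetric])
  qed
  then have "ereal (\<Sum>t\<in>{1..T}. \<mu> t / sqrt R) \<le> LB T S"
    using \<mu>_nonneg by (intro LB_ge) auto
  then show ?thesis by (simp add: sum_divide_distrib)
qed

theorem theorem8:
  fixes T R :: nat and S :: "nat \<Rightarrow> nat set"
  assumes "tfg T S"
    and "R \<ge> 1"
    and "\<forall>t\<in>{1..T}. \<exists>Os. length Os \<le> R \<and> (\<forall>ord\<in>set Os. is_order T S ord) \<and>
              S t \<subseteq> (\<Union>ord\<in>set Os. set ord)"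
  shows "ereal (UB T S) \<le> ereal (sqrt (real R)) * LB T S"
proof -
  obtain \<mu> where \<mu>: "\<forall>t. 0 \<le> \<mu> t" "\<And>xs. is_order T S xs \<Longrightarrow> (\<Sum>t\<in>set xs. (\<mu> t)\<^sup>2) \<le> 1"
    and UB: "UB T S \<le> (\<Sum>t\<in>{1..T}. \<mu> t)"
    using UB_le_dual_solution[OF assms(1)] by blast
  have "ereal (UB T S) \<le> ereal (sqrt R) * ereal ((\<Sum>t\<in>{1..T}. \<mu> t) / sqrt R)"
    using UB assms(2) by simp
  also have "\<dots> \<le> ereal (sqrt R) * LB T S"
    using LB_ge_scaled[OF assms(2) \<mu> assms(3)] by (intro ereal_mult_left_mono) auto
  finally show ?thesis .
qed

end
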